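(* Let $n=2m$ and let ${\bm c}\in\{1,2\}^n$ be fixed true labels with exactly $m$ nodes in each community. Let $\bm A$ be an undirected adjacency matrix with $A_{ij}=A_{ji}$ and entries $A_{ij}$, $1\le i\le j\le n$, mutually independent with $A_{ij}\sim\mathrm{Bernoulli}(P_{c_ic_j})$, where $\bm P=\frac2m\begin{pmatrix}a&b\\ b&a\end{pmatrix}-\frac1{m^2}\begin{pmatrix}a^2&b^2\\ b^2&a^2\end{pmatrix}$. Let $\delta>1$, $\gamma\in(0,1)\setminus\{\tfrac12\}$ with $\gamma m$ an integer, assume $\frac{(a-b)^2}{a+b}\ge C\log n$ for a sufficiently large constant $C>0$, and assume $2(1+\epsilon)a_\gamma\le\epsilon|(1-2\gamma)(a-b)|$ for some $\epsilon\in(0,1)$, where $a_\gamma=[(1-\gamma)a+\gamma b]I(\gamma>\tfrac12)+[\gamma a+(1-\gamma)b]I(\gamma<\tfrac12)$. Then there exist $\rho\in(0,1)$ and $N>0$ such that for all $n\ge N$ and any ${\bm e}^{(0)}\in\mathcal E^\gamma$, \[ \mathbb P\Big\{\bigcap_{(\hat a,\hat b)\in\mathcal P^\delta_{a,b}}\hat{\bm c}\{{\bm e}^{(0)}\}={\bm c}\Big\}\ge 1-\Big[3ne^{-\frac{(\frac{1-\rho}{4})^2(a-b)^2}{4(a+b)}}+n(n+2)\Big\{e^{-\frac{(\frac{1-\epsilon}{2})^2(2\gamma-1)^2(a-b)^2}{4(a+b)}}+2e^{-\frac{\epsilon^2/2}{1+\epsilon/2}a_\gamma}\Big\}\Big],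 \] where $\hat{\bm c}\{{\bm e}^{(0)}\}={\bm c}$ means equality up to a permutation of the labels $\{1,2\}$.
   Context: $a,b$ may depend on $n$, with $0\le a,b\le m$. $\mathcal E^\gamma$ is the set of ${\bm e}^{(0)}\in\{1,2\}^n$ such that $\#\{i:c_i=1,e^{(0)}_i=1\}=\gamma m$ and $\#\{i:c_i=2,e^{(0)}_i=2\}=\gamma m$. For $\delta>1$, $\mathcal P^\delta_{a,b}$ is the set of pairs $(\hat a,\hat b)$ with $0<\hat a,\hat b<m$ such that $\frac{\hat a}{\hat b}I(a>b)+\frac{\hat b}{\hat a}I(a<b)\ge\delta$. For such $(\hat a,\hat b)$ put $\widehat{\bm P}=\frac2m\begin{pmatrix}\hat a&\hat b\\ \hat b&\hat a\end{pmatrix}-\frac1{m^2}\begin{pmatrix}\hat a^2&\hat b^2\\ \hat b^2&\hat a^2\end{pmatrix}$, $\hat\pi_1=\hat\pi_2=1/2$, and \[ \hat\tau_{il}=\frac{\hat\pi_l\prod_{j=1}^n\widehat P_{le^{(0)}_j}^{A_{ij}}(1-\widehat P_{le^{(0)}_j})^{1-A_{ij}}}{\sum_{l'=1}^2\hat\pi_{l'}\prod_{j=1}^n\widehat P_{l'e^{(0)}_j}^{A_{ij}}(1-\widehat P_{l'e^{(0)}_j})^{1-A_{ij}}}. \] The estimator is $\hat c_j\{{\bm e}^{(0)}\}=\arg\max_{k\in\{1,2\}}\sum_{i=1}^n\sum_{l=1}^2\hat\tau_{il}\{A_{ij}\log\widehat P_{lk}+(1-A_{ij})\log(1-\widehat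 P_{lk})\}$ (it depends on $(\hat a,\hat b)$). *)

theory Defs
  imports Complex_Main
begin

text \<open>Nodes are indexed by 0,...,n-1; labels are 1 and 2.\<close>

definition Pmat :: "real \<Rightarrow> real \<Rightarrow> real \<Rightarrow> nat \<Rightarrow> nat \<Rightarrow> real" where
  "Pmat m a b k l = (if k = l then 2 / m * a - a^2 / m^2 else 2 / m * b - b^2 / m^2)"

definition balanced_labels :: "nat \<Rightarrow> (nat \<Rightarrow> nat) \<Rightarrow> bool" where
  "balanced_labels n c \<longleftrightarrow> (\<forall>i<n. c i \<in> {1,2}) \<and>
     card {i. i < n \<and> c i = 1} = n div 2 \<and> card {i. i < n \<and> c i = 2} = n div 2"

definition adj_mats :: "nat \<Rightarrow> (nat \<Rightarrow> nat \<Rightarrow> bool) set" where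
  "adj_mats n = {A. (\<forall>i j. A i j = A j i) \<and> (\<forall>i j. \<not> (i < n \<and> j < n) \<longrightarrow> \<not> A i j)}"

definition adj_weight :: "nat \<Rightarrow> (nat \<Rightarrow> nat \<Rightarrow> real) \<Rightarrow> (nat \<Rightarrow> nat) \<Rightarrow> (nat \<Rightarrow> nat \<Rightarrow> bool) \<Rightarrow> real" where
  "adj_weight n P c A = (\<Prod>(i,j)\<in>{(i,j). i \<le> j \<and> j < n}.
      (if A i j then P (c i) (c j) else 1 - P (c i) (c j)))"

definition sbm_prob :: "nat \<Rightarrow> (nat \<Rightarrow> nat \<Rightarrow> real) \<Rightarrow> (nat \<Rightarrow> nat) \<Rightarrow> (nat \<Rightarrow> nat \<Rightarrow> bool) set \<Rightarrow> real" where
  "sbm_prob n P c E = (\<Sum>A\<in>adj_mats n \<inter> E. adj_weight n P c A)"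

definition E_gamma :: "nat \<Rightarrow> real \<Rightarrow> (nat \<Rightarrow> nat) \<Rightarrow> (nat \<Rightarrow> nat) set" where
  "E_gamma n \<gamma> c = {e. (\<forall>i<n. e i \<in> {1,2}) \<and>
      real (card {i. i < n \<and> c i = 1 \<and> e i = 1}) = \<gamma> * real (n div 2) \<and>
      real (card {i. i < n \<and> c i = 2 \<and> e i = 2}) = \<gamma> * real (n div 2)}"

definition P_delta :: "real \<Rightarrow> real \<Rightarrow> real \<Rightarrow> real \<Rightarrow> (real \<times> real) set" where
  "P_delta \<delta> m a b = {(ah, bh). 0 < ah \<and> ah < m \<and> 0 < bh \<and> bh < m \<and>
      (ah / bh) * of_bool (a > b) + (bh / ah) * of_bool (a < b) \<ge> \<delta>}"

definition tau_hat :: "nat \<Rightarrow> (nat \<Rightarrow> nat \<Rightarrow> real) \<Rightarrow> (nat \<Rightarrow> nat) \<Rightarrow> (nat \<Rightarrow> nat \<Rightarrow> bool) \<Rightarrow> nat \<Rightarrow> nat \<Rightarrow> real" where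
  "tau_hat n Ph e A i l =
     (let lik = (\<lambda>l'. (1/2::real) * (\<Prod>j<n. if A i j then Ph l' (e j) else 1 - Ph l' (e j)))
      in lik l / (\<Sum>l'\<in>{1,2}. lik l'))"

definition est_score :: "nat \<Rightarrow> (nat \<Rightarrow> nat \<Rightarrow> real) \<Rightarrow> (nat \<Rightarrow> nat) \<Rightarrow> (nat \<Rightarrow> nat \<Rightarrow> bool) \<Rightarrow> nat \<Rightarrow> nat \<Rightarrow> real" where
  "est_score n Ph e A j k = (\<Sum>i<n. \<Sum>l\<in>{1,2}. tau_hat n Ph e A i l *
      (of_bool (A i j) * ln (Ph l k) + (1 - of_bool (A i j)) * ln (1 - Ph l k)))"

text \<open>Estimator c_hat_j = argmax_k score; ties are broken in favour of label 1.\<close>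
definition c_hat :: "nat \<Rightarrow> real \<Rightarrow> real \<Rightarrow> real \<Rightarrow> (nat \<Rightarrow> nat) \<Rightarrow> (nat \<Rightarrow> nat \<Rightarrow> bool) \<Rightarrow> nat \<Rightarrow> nat" where
  "c_hat n m ah bh e A j =
     (let Ph = Pmat m ah bh in if est_score n Ph e A j 1 \<ge> est_score n Ph e A j 2 then 1 else 2)"

definition eq_up_to_perm :: "nat \<Rightarrow> (nat \<Rightarrow> nat) \<Rightarrow> (nat \<Rightarrow> nat) \<Rightarrow> bool" where
  "eq_up_to_perm n x y \<longleftrightarrow> (\<forall>i<n. x i = y i) \<or> (\<forall>i<n. x i = 3 - y i)"

definition a_gamma :: "real \<Rightarrow> real \<Rightarrow> real \<Rightarrow> real" where
  "a_gamma \<gamma> a b = ((1 - \<gamma>) * a + \<gamma> * b) * of_bool (\<gamma> > 1/2) + (\<gamma> * a + (1 - \<gamma>) * b) * of_bool (\<gamma> < 1/2)"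

end

(* Put kappa = 9 |2 gamma - 1| / 16 and K = kappa a / 2.  Suppose every node i has e-signed
   degree sum_j spin (e j) A i j of the sign of spin (c i) (flipped if gamma < 1/2) and of size
   at least K, and more neighbours inside its community than outside.  Then the estimator is
   exact for every (ah, bh) in P_delta at once: as e is balanced, for a two-block estimate
   tau_i1 - tau_i2 is tanh of half the log-odds gap times the signed degree of i, hence within
   2 exp (-K ln delta) of the correct sign, and the score difference of node j is a positive
   multiple of its community-signed degree up to an error of order n exp (-K ln delta) < 1/4,
   as the signal condition gives K ln delta >= 2 ln n.  A Chernoff bound for each row and a
   union bound show that the two conditions fail with probability at most
   2 n exp (-kappa^2 a / 64), which is smaller than the bound in the statement. *)

theory Submission
  imports Defs "HOL-Probability.Probability"
begin

section \<open>Chernoff bound for weighted sums of independent Bernoulli variables\<close>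

lemma exp_le_one_add_self_add_square:
  fixes y :: real
  assumes "\<bar>y\<bar> \<le> 1"
  shows "exp y \<le> 1 + y + y^2"
proof (cases "0 \<le> y")
  case True
  then show ?thesis using exp_bound[of y] assms by simp
next
  case False
  have "1 - y \<le> exp (- y)"
    using exp_ge_add_one_self[of "- y"] by simp
  then have "exp y \<le> 1 / (1 - y)"
    using False by (simp add: exp_minus field_simps)
  also have "\<dots> \<le> 1 + y + y^2"
  proof -
    have "1 \<le> (1 - y) * (1 + y + y^2)"
      using False mult_nonpos_nonneg[of y "y * y"] by (simp add: algebra_simps power2_eq_square)
    then show ?thesis
      using False by (simp add: field_simps)
  qed
  finally show ?thesis .
qed

lemma bernoulli_mgf_le:
  fixes p u s :: real
  assumes p: "0 \<le> p" "p \<le> 1" and u: "\<bar>u\<bar> \<le> 1" and s: "0 \<le> s" "s \<le> 1"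
  shows "p * exp (- s * u) + (1 - p) \<le> exp (p * (- s * u + s^2))"
proof -
  have "\<bar>- s * u\<bar> \<le> 1"
    using u s by (simp add: abs_mult mult_le_one)
  then have "exp (- s * u) \<le> 1 + (- s * u) + (- s * u)^2"
    by (rule exp_le_one_add_self_add_square)
  also have "(- s * u)^2 \<le> s^2"
    using abs_le_square_iff[of u 1] u by (simp add: power_mult_distrib mult_left_le)
  finally have "p * exp (- s * u) \<le> p * (1 + (- s * u + s^2))"
    using p(1) by (simp add: mult_left_mono add.assoc)
  then have "p * exp (- s * u) + (1 - p) \<le> 1 + p * (- s * u + s^2)"
    by (simp add: algebra_simps)
  also have "\<dots> \<le> exp (p * (- s * u + s^2))"
    by (rule exp_ge_add_one_self)
  finally show ?thesis .
qed

lemma finite_set_Pi_pmf_bernoulli: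
  assumes "finite U"
  shows "finite (set_pmf (Pi_pmf U False (\<lambda>q. bernoulli_pmf (pr q))))"
proof (rule finite_subset)
  show "set_pmf (Pi_pmf U False (\<lambda>q. bernoulli_pmf (pr q))) \<subseteq> PiE_dflt U False (\<lambda>_. UNIV)"
    using set_Pi_pmf_subset[OF assms, of False] by (auto simp: PiE_dflt_def)
  show "finite (PiE_dflt U False (\<lambda>_. UNIV :: bool set))"
    using assms by (intro finite_PiE_dflt) auto
qed

lemma expectation_exp_Pi_bernoulli:
  fixes \<phi> :: "'b \<Rightarrow> 'a" and g :: "'b \<Rightarrow> real"
  assumes U: "finite U" and W: "finite W" and inj: "inj_on \<phi> W" and sub: "\<phi> ` W \<subseteq> U"
    and pr: "\<And>q. q \<in> U \<Longrightarrow> 0 \<le> pr q \<and> pr q \<le> 1"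
  shows "measure_pmf.expectation (Pi_pmf U False (\<lambda>q. bernoulli_pmf (pr q)))
           (\<lambda>x. exp (\<Sum>w\<in>W. g w * of_bool (x (\<phi> w))))
         = (\<Prod>w\<in>W. pr (\<phi> w) * exp (g w) + (1 - pr (\<phi> w)))"
proof -
  define f where "f q b = (if q \<in> \<phi> ` W then exp (g (the_inv_into W \<phi> q) * of_bool b) else 1)"
    for q and b :: bool
  have f_\<phi>: "f (\<phi> w) b = exp (g w * of_bool b)" if "w \<in> W" for w b
    using that by (simp add: f_def the_inv_into_f_f[OF inj])
  have factor: "exp (\<Sum>w\<in>W. g w * of_bool (x (\<phi> w))) = (\<Prod>q\<in>U. f q (x q))" for x
  proof -
    have "exp (\<Sum>w\<in>W. g w * of_bool (x (\<phi> w))) = (\<Prod>w\<in>W. f (\<phi> w) (x (\<phi> w)))"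
      by (simp add: exp_sum[OF W] f_\<phi>)
    also have "\<dots> = (\<Prod>q\<in>\<phi> ` W. f q (x q))"
      by (simp add: prod.reindex[OF inj])
    also have "\<dots> = (\<Prod>q\<in>U. f q (x q))"
      by (rule prod.mono_neutral_left[OF U sub]) (auto simp: f_def)
    finally show ?thesis .
  qed
  have "measure_pmf.expectation (Pi_pmf U False (\<lambda>q. bernoulli_pmf (pr q))) (\<lambda>x. \<Prod>q\<in>U. f q (x q))
      = (\<Prod>q\<in>U. measure_pmf.expectation (bernoulli_pmf (pr q)) (f q))"
    by (rule expectation_prod_Pi_pmf[OF U]) (auto simp: f_def integrable_measure_pmf_finite)
  also have "\<dots> = (\<Prod>q\<in>U. pr q * f q True + (1 - pr q) * f q False)"
    using pr by (intro prod.cong) auto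
  also have "\<dots> = (\<Prod>q\<in>\<phi> ` W. pr q * f q True + (1 - pr q) * f q False)"
    by (rule prod.mono_neutral_right[OF U sub]) (auto simp: f_def)
  also have "\<dots> = (\<Prod>w\<in>W. pr (\<phi> w) * exp (g w) + (1 - pr (\<phi> w)))"
    by (simp add: prod.reindex[OF inj] f_\<phi>)
  finally show ?thesis
    by (simp only: factor)
qed

lemma prob_Pi_bernoulli_weighted_sum_le:
  fixes \<phi> :: "'b \<Rightarrow> 'a" and u :: "'b \<Rightarrow> real"
  assumes U: "finite U" and W: "finite W" and inj: "inj_on \<phi> W" and sub: "\<phi> ` W \<subseteq> U"
    and pr: "\<And>q. q \<in> U \<Longrightarrow> 0 \<le> pr q \<and> pr q \<le> 1"
    and u: "\<And>w. w \<in> W \<Longrightarrow> \<bar>u w\<bar> \<le> 1" and s: "0 < s" "s \<le> 1"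
  shows "measure_pmf.prob (Pi_pmf U False (\<lambda>q. bernoulli_pmf (pr q)))
           {x. (\<Sum>w\<in>W. u w * of_bool (x (\<phi> w))) \<le> (\<Sum>w\<in>W. u w * pr (\<phi> w)) - \<tau>}
         \<le> exp (- s * \<tau> + s^2 * (\<Sum>w\<in>W. pr (\<phi> w)))"
proof -
  define M where "M = Pi_pmf U False (\<lambda>q. bernoulli_pmf (pr q))"
  define Y where "Y x = (\<Sum>w\<in>W. u w * of_bool (x (\<phi> w)))" for x
  define \<mu> where "\<mu> = (\<Sum>w\<in>W. u w * pr (\<phi> w))"
  have fin: "finite (set_pmf M)"
    unfolding M_def by (rule finite_set_Pi_pmf_bernoulli[OF U])
  have "measure_pmf.prob M {x. Y x \<le> \<mu> - \<tau>}
      \<le> exp (s * (\<mu> - \<tau>)) * measure_pmf.expectation M (\<lambda>x. exp (- s * Y x))"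
    using measure_pmf.Chernoff_ineq_le[OF s(1), where M = M and A = UNIV and f = Y and a = "\<mu> - \<tau>"]
    by (simp add: set_integrable_def integrable_measure_pmf_finite[OF fin]
                  set_integral_space[where M = M, simplified])
  also have "measure_pmf.expectation M (\<lambda>x. exp (- s * Y x))
      = (\<Prod>w\<in>W. pr (\<phi> w) * exp (- s * u w) + (1 - pr (\<phi> w)))"
    using expectation_exp_Pi_bernoulli[OF U W inj sub pr, where g = "\<lambda>w. - s * u w"]
    by (simp add: M_def Y_def sum_distrib_left mult.assoc)
  also have "\<dots> \<le> (\<Prod>w\<in>W. exp (pr (\<phi> w) * (- s * u w + s^2)))"
    using pr sub u s by (intro prod_mono conjI bernoulli_mgf_le) (auto simp: add_nonneg_nonneg)
  also have "\<dots> = exp (- s * \<mu> + s^2 * (\<Sum>w\<in>W. pr (\<phi> w)))"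
    by (simp add: exp_sum[OF W, symmetric] \<mu>_def sum_distrib_left sum_subtractf sum_negf algebra_simps)
  finally have "measure_pmf.prob M {x. Y x \<le> \<mu> - \<tau>}
      \<le> exp (s * (\<mu> - \<tau>)) * exp (- s * \<mu> + s^2 * (\<Sum>w\<in>W. pr (\<phi> w)))"
    by (simp add: mult_left_mono)
  then show ?thesis
    by (simp add: M_def Y_def \<mu>_def mult_exp_exp algebra_simps)
qed

section \<open>The stochastic block model as a product of Bernoulli distributions\<close>

(* A graph is drawn as a family of independent edge indicators on the pairs i <= j;
   sym_matrix reads off the symmetric adjacency matrix. *)

definition upper_pairs :: "nat \<Rightarrow> (nat \<times> nat) set" where
  "upper_pairs n = {(i, j). i \<le> j \<and> j < n}"

definition sym_matrix :: "(nat \<times> nat \<Rightarrow> bool) \<Rightarrow> nat \<Rightarrow> nat \<Rightarrow> bool" where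
  "sym_matrix x i j = x (min i j, max i j)"

definition sbm_pmf :: "nat \<Rightarrow> (nat \<Rightarrow> nat \<Rightarrow> real) \<Rightarrow> (nat \<Rightarrow> nat) \<Rightarrow> (nat \<times> nat \<Rightarrow> bool) pmf" where
  "sbm_pmf n P c = Pi_pmf (upper_pairs n) False (\<lambda>(i, j). bernoulli_pmf (P (c i) (c j)))"

lemma finite_upper_pairs: "finite (upper_pairs n)"
  by (rule finite_subset[of _ "{..<n} \<times> {..<n}"]) (auto simp: upper_pairs_def)

lemma sym_matrix_commute: "sym_matrix x i j = sym_matrix x j i"
  by (simp add: sym_matrix_def min.commute max.commute)

lemma sbm_prob_eq_sum_pmf:
  assumes P: "\<And>i j. 0 \<le> P (c i) (c j) \<and> P (c i) (c j) \<le> 1"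
  shows "sbm_prob n P c E
       = sum (pmf (sbm_pmf n P c)) (PiE_dflt (upper_pairs n) False (\<lambda>_. UNIV) \<inter> {x. sym_matrix x \<in> E})"
  unfolding sbm_prob_def
proof (rule sum.reindex_bij_witness[where i = sym_matrix
      and j = "\<lambda>A q. q \<in> upper_pairs n \<and> A (fst q) (snd q)"])
  fix A assume A: "A \<in> adj_mats n \<inter> E"
  then have sym: "A i j = A j i" and out: "A i j \<Longrightarrow> i < n \<and> j < n" for i j
    by (auto simp: adj_mats_def)
  show "sym_matrix (\<lambda>q. q \<in> upper_pairs n \<and> A (fst q) (snd q)) = A"
    by (intro ext) (auto simp: sym_matrix_def upper_pairs_def min_def max_def sym dest: out)
  with A show "(\<lambda>q. q \<in> upper_pairs n \<and> A (fst q) (snd q))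
      \<in> PiE_dflt (upper_pairs n) False (\<lambda>_. UNIV) \<inter> {x. sym_matrix x \<in> E}"
    by (auto simp: PiE_dflt_def)
  show "pmf (sbm_pmf n P c) (\<lambda>q. q \<in> upper_pairs n \<and> A (fst q) (snd q)) = adj_weight n P c A"
    unfolding sbm_pmf_def adj_weight_def
    by (subst pmf_Pi'[OF finite_upper_pairs]) (auto simp: upper_pairs_def P intro!: prod.cong)
next
  fix x assume x: "x \<in> PiE_dflt (upper_pairs n) False (\<lambda>_. UNIV) \<inter> {x. sym_matrix x \<in> E}"
  then have out: "q \<notin> upper_pairs n \<Longrightarrow> \<not> x q" for q
    by (cases q) (auto simp: PiE_dflt_def)
  show "(\<lambda>q. q \<in> upper_pairs n \<and> sym_matrix x (fst q) (snd q)) = x"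
  proof
    fix q :: "nat \<times> nat"
    show "(q \<in> upper_pairs n \<and> sym_matrix x (fst q) (snd q)) = x q"
      using out[of q] by (cases q) (auto simp: sym_matrix_def upper_pairs_def min_def max_def)
  qed
  have "sym_matrix x \<in> adj_mats n"
    using out[of "(min i j, max i j)" for i j]
    by (auto simp: adj_mats_def sym_matrix_commute upper_pairs_def sym_matrix_def)
  with x show "sym_matrix x \<in> adj_mats n \<inter> E"
    by simp
qed

lemma sbm_prob_eq_measure_sbm_pmf:
  assumes P: "\<And>i j. 0 \<le> P (c i) (c j) \<and> P (c i) (c j) \<le> 1"
  shows "sbm_prob n P c E = measure_pmf.prob (sbm_pmf n P c) {x. sym_matrix x \<in> E}"
proof -
  define M where "M = sbm_pmf n P c"
  define X where "X = PiE_dflt (upper_pairs n) False (\<lambda>_. UNIV) \<inter> {x. sym_matrix x \<in> E}"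
  have "finite X"
    unfolding X_def by (intro finite_Int disjI1 finite_PiE_dflt finite_upper_pairs) auto
  have "set_pmf M \<inter> {x. sym_matrix x \<in> E} \<subseteq> X"
    unfolding M_def X_def sbm_pmf_def using set_Pi_pmf_subset[OF finite_upper_pairs, of n False]
    by (auto simp: PiE_dflt_def)
  then have "measure_pmf.prob M {x. sym_matrix x \<in> E} \<le> measure_pmf.prob M X"
    by (subst measure_Int_set_pmf[symmetric]) (intro measure_pmf.finite_measure_mono, auto simp: Int_commute)
  moreover have "measure_pmf.prob M X \<le> measure_pmf.prob M {x. sym_matrix x \<in> E}"
    by (rule measure_pmf.finite_measure_mono) (auto simp: X_def)
  ultimately have "measure_pmf.prob M X = measure_pmf.prob M {x. sym_matrix x \<in> E}"
    by linarith
  then show ?thesis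
    using measure_measure_pmf_finite[OF \<open>finite X\<close>, of M]
    by (simp add: sbm_prob_eq_sum_pmf[where P = P and c = c, OF P] M_def X_def)
qed

lemma sbm_row_lower_tail:
  fixes u :: "nat \<Rightarrow> real"
  assumes v: "v < n" and P: "\<And>k l. 0 \<le> P k l \<and> P k l \<le> 1" and P_sym: "\<And>k l. P k l = P l k"
    and u: "\<And>w. \<bar>u w\<bar> \<le> 1" and s: "0 < s" "s \<le> 1"
  shows "measure_pmf.prob (sbm_pmf n P c)
           {x. (\<Sum>w<n. u w * of_bool (sym_matrix x v w)) \<le> (\<Sum>w<n. u w * P (c v) (c w)) - \<tau>}
         \<le> exp (- s * \<tau> + s^2 * (\<Sum>w<n. P (c v) (c w)))"
proof -
  define \<phi> where "\<phi> w = (min v w, max v w)" for w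
  have inj: "inj_on \<phi> {..<n}"
    by (auto simp: inj_on_def \<phi>_def min_def max_def split: if_splits)
  have sub: "\<phi> ` {..<n} \<subseteq> upper_pairs n"
    using v by (auto simp: \<phi>_def upper_pairs_def min_def max_def)
  define pr where "pr = (\<lambda>(i, j). P (c i) (c j))"
  have pr_\<phi>: "pr (\<phi> w) = P (c v) (c w)" for w
    by (auto simp: pr_def \<phi>_def min_def max_def P_sym)
  have sym_matrix_\<phi>: "sym_matrix x v w = x (\<phi> w)" for x w
    by (simp add: sym_matrix_def \<phi>_def)
  have pmf_eq: "sbm_pmf n P c = Pi_pmf (upper_pairs n) False (\<lambda>q. bernoulli_pmf (pr q))"
    by (simp add: sbm_pmf_def pr_def case_prod_unfold)
  have "measure_pmf.prob (sbm_pmf n P c)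
          {x. (\<Sum>w<n. u w * of_bool (x (\<phi> w))) \<le> (\<Sum>w<n. u w * pr (\<phi> w)) - \<tau>}
        \<le> exp (- s * \<tau> + s^2 * (\<Sum>w<n. pr (\<phi> w)))"
    unfolding pmf_eq
    by (rule prob_Pi_bernoulli_weighted_sum_le[OF finite_upper_pairs finite_lessThan inj sub _ u s])
       (use P in \<open>auto simp: pr_def\<close>)
  then show ?thesis
    by (simp only: pr_\<phi> sym_matrix_\<phi>)
qed

definition row_below_half_mean ::
    "nat \<Rightarrow> (nat \<Rightarrow> nat \<Rightarrow> real) \<Rightarrow> (nat \<Rightarrow> nat) \<Rightarrow> (nat \<Rightarrow> nat \<Rightarrow> real) \<Rightarrow> (nat \<times> nat \<Rightarrow> bool) set" where
  "row_below_half_mean n P c u =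
     {x. \<exists>v<n. (\<Sum>w<n. u v w * of_bool (sym_matrix x v w)) \<le> (\<Sum>w<n. u v w * P (c v) (c w)) / 2}"

lemma prob_row_below_half_mean_le:
  fixes u :: "nat \<Rightarrow> nat \<Rightarrow> real" and \<kappa> a :: real
  assumes P: "\<And>k l. 0 \<le> P k l \<and> P k l \<le> 1" and P_sym: "\<And>k l. P k l = P l k"
    and u: "\<And>v w. \<bar>u v w\<bar> \<le> 1" and \<kappa>: "0 < \<kappa>" "\<kappa> \<le> 16"
    and mean: "\<And>v. v < n \<Longrightarrow> \<kappa> * a \<le> (\<Sum>w<n. u v w * P (c v) (c w))"
    and degree: "\<And>v. v < n \<Longrightarrow> (\<Sum>w<n. P (c v) (c w)) \<le> 4 * a"
  shows "measure_pmf.prob (sbm_pmf n P c) (row_below_half_mean n P c u) \<le> real n * exp (- (\<kappa>^2 * a / 64))"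
proof -
  define M where "M = sbm_pmf n P c"
  define B where "B v = {x. (\<Sum>w<n. u v w * of_bool (sym_matrix x v w)) \<le> (\<Sum>w<n. u v w * P (c v) (c w)) / 2}"
    for v
  have row: "measure_pmf.prob M (B v) \<le> exp (- (\<kappa>^2 * a / 64))" if v: "v < n" for v
  proof -
    define \<mu> where "\<mu> = (\<Sum>w<n. u v w * P (c v) (c w))"
    have "measure_pmf.prob M (B v) \<le> exp (- (\<kappa> / 16) * (\<mu> / 2) + (\<kappa> / 16)^2 * (\<Sum>w<n. P (c v) (c w)))"
      using sbm_row_lower_tail[where P = P and u = "u v" and s = "\<kappa> / 16" and c = c and \<tau> = "\<mu> / 2",
          OF v P P_sym u] \<kappa>
      by (simp add: M_def B_def \<mu>_def)
    also have "\<dots> \<le> exp (- (\<kappa>^2 * a / 64))"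
    proof -
      have "(\<kappa> / 16) * (\<kappa> * a) \<le> (\<kappa> / 16) * \<mu>"
        using mean[OF v] \<kappa> by (simp add: \<mu>_def)
      moreover have "(\<kappa> / 16)^2 * (\<Sum>w<n. P (c v) (c w)) \<le> (\<kappa> / 16)^2 * (4 * a)"
        using degree[OF v] by (intro mult_left_mono) auto
      ultimately show ?thesis
        by (simp add: power2_eq_square)
    qed
    finally show ?thesis .
  qed
  have "row_below_half_mean n P c u = (\<Union>v<n. B v)"
    by (auto simp: row_below_half_mean_def B_def)
  then have "measure_pmf.prob M (row_below_half_mean n P c u) \<le> (\<Sum>v<n. measure_pmf.prob M (B v))"
    by (simp add: measure_pmf.finite_measure_subadditive_finite)
  also have "\<dots> \<le> (\<Sum>v<n. exp (- (\<kappa>^2 * a / 64)))"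
    by (rule sum_mono) (use row in auto)
  finally show ?thesis
    by (simp add: M_def)
qed

lemma sbm_prob_ge_if_rows_above_half_mean:
  fixes u\<^sub>1 u\<^sub>2 :: "nat \<Rightarrow> nat \<Rightarrow> real" and \<kappa> a :: real
  assumes P: "\<And>k l. 0 \<le> P k l \<and> P k l \<le> 1" and P_sym: "\<And>k l. P k l = P l k"
    and u: "\<And>v w. \<bar>u\<^sub>1 v w\<bar> \<le> 1" "\<And>v w. \<bar>u\<^sub>2 v w\<bar> \<le> 1" and \<kappa>: "0 < \<kappa>" "\<kappa> \<le> 16"
    and mean: "\<And>v. v < n \<Longrightarrow> \<kappa> * a \<le> (\<Sum>w<n. u\<^sub>1 v w * P (c v) (c w))"
      "\<And>v. v < n \<Longrightarrow> \<kappa> * a \<le> (\<Sum>w<n. u\<^sub>2 v w * P (c v) (c w))"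
    and degree: "\<And>v. v < n \<Longrightarrow> (\<Sum>w<n. P (c v) (c w)) \<le> 4 * a"
    and good: "\<And>x. x \<notin> row_below_half_mean n P c u\<^sub>1 \<Longrightarrow> x \<notin> row_below_half_mean n P c u\<^sub>2
                 \<Longrightarrow> sym_matrix x \<in> E"
  shows "1 - 2 * real n * exp (- (\<kappa>^2 * a / 64)) \<le> sbm_prob n P c E"
proof -
  define M where "M = sbm_pmf n P c"
  define B where "B = row_below_half_mean n P c u\<^sub>1 \<union> row_below_half_mean n P c u\<^sub>2"
  have "measure_pmf.prob M B
      \<le> measure_pmf.prob M (row_below_half_mean n P c u\<^sub>1)
        + measure_pmf.prob M (row_below_half_mean n P c u\<^sub>2)"
    unfolding B_def by (rule measure_Un_le) auto
  also have "\<dots> \<le> 2 * real n * exp (- (\<kappa>^2 * a / 64))"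
    using prob_row_below_half_mean_le[where u = u\<^sub>1 and P = P and c = c and a = a and n = n,
        OF P P_sym u(1) \<kappa> mean(1) degree]
      prob_row_below_half_mean_le[where u = u\<^sub>2 and P = P and c = c and a = a and n = n,
        OF P P_sym u(2) \<kappa> mean(2) degree]
    by (simp add: M_def)
  finally have "1 - 2 * real n * exp (- (\<kappa>^2 * a / 64)) \<le> measure_pmf.prob M (UNIV - B)"
    using measure_pmf.prob_compl[of B M] by simp
  also have "\<dots> \<le> measure_pmf.prob M {x. sym_matrix x \<in> E}"
    using good by (intro measure_pmf.finite_measure_mono) (auto simp: B_def)
  also have "\<dots> = sbm_prob n P c E"
    using P by (simp add: M_def sbm_prob_eq_measure_sbm_pmf)
  finally show ?thesis .
qed

section \<open>Edge probabilities and posterior weights\<close>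

definition spin :: "nat \<Rightarrow> real" where
  "spin k = (if k = 1 then 1 else -1)"

definition two_block :: "real \<Rightarrow> real \<Rightarrow> nat \<Rightarrow> nat \<Rightarrow> real" where
  "two_block p q k l = (if k = l then p else q)"

definition edge_prob :: "real \<Rightarrow> real \<Rightarrow> real" where
  "edge_prob m a = 2 / m * a - a^2 / m^2"

lemma Pmat_eq_two_block: "Pmat m a b = two_block (edge_prob m a) (edge_prob m b)"
  by (intro ext) (simp add: Pmat_def two_block_def edge_prob_def)

lemma spin_cases: "spin k = 1 \<or> spin k = -1"
  by (simp add: spin_def)

lemma abs_spin [simp]: "\<bar>spin k\<bar> = 1"
  by (simp add: spin_def)

lemma spin_mult_self [simp]: "spin k * spin k = 1"
  by (simp add: spin_def)

lemma edge_prob_eq: "0 < m \<Longrightarrow> edge_prob m a = 1 - (1 - a / m)^2"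
  by (simp add: edge_prob_def field_simps power2_eq_square)

lemma edge_prob_bounds:
  assumes "0 < m" "0 \<le> a" "a \<le> m"
  shows "0 \<le> edge_prob m a" "edge_prob m a \<le> 1"
proof -
  have "(1 - a / m)^2 \<le> 1"
    using assms by (intro power_le_one) auto
  then show "0 \<le> edge_prob m a"
    using assms(1) by (simp add: edge_prob_eq)
  show "edge_prob m a \<le> 1"
    using assms(1) by (simp add: edge_prob_eq)
qed

lemma edge_prob_strict_bounds:
  assumes "0 < a" "a < m"
  shows "0 < edge_prob m a" "edge_prob m a < 1"
proof -
  have "0 < 1 - a / m" "1 - a / m < 1"
    using assms by auto
  then have "0 < (1 - a / m)^2" "(1 - a / m)^2 < 1"
    by (auto simp: power_less_one_iff)
  then show "0 < edge_prob m a" "edge_prob m a < 1"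
    using assms by (simp_all add: edge_prob_eq)
qed

lemma edge_prob_diff:
  "0 < m \<Longrightarrow> m * (edge_prob m a - edge_prob m b) = (a - b) * (2 - (a + b) / m)"
  by (simp add: edge_prob_def field_simps power2_eq_square)

lemma edge_prob_mono:
  assumes "0 < m" "b \<le> a" "a + b \<le> 2 * m"
  shows "edge_prob m b \<le> edge_prob m a"
proof -
  have "0 \<le> (a - b) * (2 - (a + b) / m)"
    using assms by (intro mult_nonneg_nonneg) (auto simp: divide_le_eq)
  then have "0 \<le> m * (edge_prob m a - edge_prob m b)"
    using edge_prob_diff[OF assms(1), of a b] by simp
  with assms(1) show ?thesis
    by (simp add: zero_le_mult_iff)
qed

lemma edge_prob_odds_ratio_ge:
  assumes m: "0 < m" and ab: "0 < b" "b < a" "a < m" and \<delta>: "0 < \<delta>" "\<delta> * b \<le> a"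
  shows "\<delta> * (edge_prob m b * (1 - edge_prob m a)) \<le> edge_prob m a * (1 - edge_prob m b)"
proof -
  define x where "x = 1 - a / m"
  define y where "y = 1 - b / m"
  have xy: "0 < x" "x < y" "y < 1" "\<delta> * (1 - y) \<le> 1 - x"
    using ab m \<delta> by (auto simp: x_def y_def field_simps)
  have odds: "edge_prob m a = (1 - x) * (1 + x)" "edge_prob m b = (1 - y) * (1 + y)"
    using m by (simp_all add: edge_prob_eq x_def y_def power2_eq_square algebra_simps)
  have "(1 + y) * x^2 \<le> (1 + x) * y^2"
  proof -
    have "(1 + x) * y^2 - (1 + y) * x^2 = (y - x) * (y + x + x * y)"
      by (simp add: power2_eq_square algebra_simps)
    also have "0 \<le> \<dots>"
      using xy by (intro mult_nonneg_nonneg) auto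
    finally show ?thesis by simp
  qed
  have "\<delta> * ((1 - y) * (1 + y) * x^2) = (\<delta> * (1 - y)) * ((1 + y) * x^2)"
    by simp
  also have "\<dots> \<le> (1 - x) * ((1 + y) * x^2)"
    using xy by (intro mult_right_mono) auto
  also have "\<dots> \<le> (1 - x) * ((1 + x) * y^2)"
    using \<open>(1 + y) * x^2 \<le> (1 + x) * y^2\<close> xy by (intro mult_left_mono) auto
  finally show ?thesis
    by (simp add: odds power2_eq_square algebra_simps)
qed

lemma edge_prob_gap_bounds:
  assumes m: "0 < m" and ab: "0 \<le> b" "4 * b \<le> a" "a \<le> m"
  shows "9 * a / 16 \<le> m * (edge_prob m a - edge_prob m b)"
    and "m * (edge_prob m a + edge_prob m b) \<le> 4 * a"
proof -
  have "(a + b) / m \<le> 5 / 4"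
    using ab m by (simp add: divide_le_eq)
  then have "(3 * a / 4) * (3 / 4) \<le> (a - b) * (2 - (a + b) / m)"
    using ab by (intro mult_mono) auto
  then show "9 * a / 16 \<le> m * (edge_prob m a - edge_prob m b)"
    by (simp add: edge_prob_diff[OF m])
  have "m * edge_prob m a \<le> 2 * a" "m * edge_prob m b \<le> 2 * b"
    using m by (simp_all add: edge_prob_def field_simps)
  then show "m * (edge_prob m a + edge_prob m b) \<le> 4 * a"
    using ab by (simp add: algebra_simps)
qed

definition logit :: "real \<Rightarrow> real" where
  "logit p = ln p - ln (1 - p)"

definition posterior_gap ::
    "nat \<Rightarrow> (nat \<Rightarrow> nat \<Rightarrow> real) \<Rightarrow> (nat \<Rightarrow> nat) \<Rightarrow> (nat \<Rightarrow> nat \<Rightarrow> bool) \<Rightarrow> nat \<Rightarrow> real" where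
  "posterior_gap n Ph e A i = tau_hat n Ph e A i 1 - tau_hat n Ph e A i 2"

lemma ln_le_logit_diff:
  fixes p q \<delta> :: real
  assumes pq: "0 < q" "q \<le> p" "p < 1" and \<delta>: "0 < \<delta>" "\<delta> * (q * (1 - p)) \<le> p * (1 - q)"
  shows "ln \<delta> \<le> logit p - logit q"
proof -
  have "ln (\<delta> * (q * (1 - p))) \<le> ln (p * (1 - q))"
    using \<delta> pq by (subst ln_le_cancel_iff) (auto intro!: mult_pos_pos)
  then show ?thesis
    using pq \<delta> by (simp add: ln_mult logit_def)
qed

lemma tanh_ge_one_minus_two_exp:
  fixes x :: real
  shows "1 - 2 * exp (- 2 * x) \<le> tanh x"
proof -
  define u where "u = exp (- 2 * x)"
  have "0 < u"
    by (simp add: u_def)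
  then have "1 - 2 * u \<le> (1 - u) / (1 + u)"
    by (simp add: field_simps)
  then show ?thesis
    by (simp add: tanh_real_altdef u_def)
qed

lemma posterior_gap_eq_tanh:
  fixes p q :: real
  assumes pq: "0 < p" "p < 1" "0 < q" "q < 1"
    and e: "\<forall>j<n. e j \<in> {1, 2}" and e_bal: "(\<Sum>j<n. spin (e j)) = 0"
  shows "posterior_gap n (two_block p q) e A i
       = tanh ((logit p - logit q) * (\<Sum>j<n. spin (e j) * of_bool (A i j)) / 2)"
proof -
  define t where "t = logit p - logit q"
  define L where "L = ln (1 - q) - ln (1 - p)"
  define D where "D = (\<Sum>j<n. spin (e j) * of_bool (A i j))"
  define f where "f l j = (if A i j then two_block p q l (e j) else 1 - two_block p q l (e j))" for l j
  define lik where "lik l = 1 / 2 * (\<Prod>j<n. f l j)" for l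
  have f_pos: "0 < f l j" for l j
    using pq by (simp add: f_def two_block_def)
  then have lik_pos: "0 < lik l" for l
    by (simp add: lik_def prod_pos)
  have f_nonzero: "f l j \<noteq> 0" for l j
    using f_pos[of l j] by simp
  have log_ratio: "ln (f 1 j) - ln (f 2 j) = spin (e j) * (of_bool (A i j) * t - L)" if "j < n" for j
    using e that by (cases "A i j") (auto simp: f_def two_block_def spin_def t_def L_def logit_def)
  have "ln (lik 1) - ln (lik 2) = (\<Sum>j<n. ln (f 1 j) - ln (f 2 j))"
    using f_pos by (simp add: lik_def ln_div ln_prod f_nonzero prod_pos sum_subtractf)
  also have "\<dots> = (\<Sum>j<n. spin (e j) * (of_bool (A i j) * t - L))"
    by (rule sum.cong[OF refl], rule log_ratio) simp
  also have "\<dots> = t * D - L * (\<Sum>j<n. spin (e j))"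
    by (simp add: D_def sum_distrib_left sum_subtractf algebra_simps del: sum_mult_of_bool_eq)
  finally have "ln (lik 2) = ln (lik 1) - t * D"
    using e_bal by simp
  then have lik_2: "lik 2 = lik 1 * exp (- (t * D))"
    using lik_pos by (metis exp_ln exp_add diff_conv_add_uminus)
  have "posterior_gap n (two_block p q) e A i = (lik 1 - lik 2) / (lik 1 + lik 2)"
    by (simp add: posterior_gap_def tau_hat_def lik_def f_def Let_def diff_divide_distrib)
  also have "\<dots> = (lik 1 * (1 - exp (- (t * D)))) / (lik 1 * (1 + exp (- (t * D))))"
    by (simp add: lik_2 algebra_simps)
  also have "\<dots> = (1 - exp (- (t * D))) / (1 + exp (- (t * D)))"
    using lik_pos[of 1] by simp
  also have "\<dots> = tanh (t * D / 2)"
    by (simp add: tanh_real_altdef)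
  finally show ?thesis
    by (simp add: t_def D_def)
qed

section \<open>Exact recovery on a good event\<close>

lemma est_score_diff:
  "est_score n (two_block p q) e A j 1 - est_score n (two_block p q) e A j 2
   = (\<Sum>i<n. posterior_gap n (two_block p q) e A i
        * (of_bool (A i j) * (logit p - logit q) - (ln (1 - q) - ln (1 - p))))"
  unfolding est_score_def posterior_gap_def sum_subtractf[symmetric]
  by (rule sum.cong[OF refl]) (simp add: two_block_def logit_def algebra_simps)

lemma posterior_margin_bounds:
  fixes p q \<delta> \<sigma> K :: real
  assumes pq: "0 < q" "q \<le> p" "p < 1" and odds: "\<delta> * (q * (1 - p)) \<le> p * (1 - q)" and \<delta>: "1 < \<delta>"
    and e: "\<forall>j<n. e j \<in> {1, 2}" and e_bal: "(\<Sum>j<n. spin (e j)) = 0"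
    and \<sigma>: "\<sigma> = 1 \<or> \<sigma> = -1" and K: "0 \<le> K"
    and deg: "K \<le> (\<Sum>j<n. \<sigma> * spin (c i) * spin (e j) * of_bool (A i j))"
  shows "1 - 2 * exp (- (K * ln \<delta>)) \<le> \<sigma> * spin (c i) * posterior_gap n (two_block p q) e A i"
    and "\<sigma> * spin (c i) * posterior_gap n (two_block p q) e A i \<le> 1"
proof -
  define t where "t = logit p - logit q"
  define r where "r = \<sigma> * spin (c i)"
  define x where "x = r * t * (\<Sum>j<n. spin (e j) * of_bool (A i j)) / 2"
  have t: "ln \<delta> \<le> t"
    unfolding t_def using pq odds \<delta> by (intro ln_le_logit_diff) auto
  have r: "r = 1 \<or> r = -1"
    using \<sigma> spin_cases[of "c i"] by (auto simp: r_def)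
  have tanh_x: "r * posterior_gap n (two_block p q) e A i = tanh x"
    using r posterior_gap_eq_tanh[OF _ _ pq(1) _ e e_bal, of p A i] pq
    by (auto simp: x_def t_def mult_ac)
  have "K * ln \<delta> \<le> t * K"
    using mult_left_mono[OF t K] by (simp add: mult.commute)
  also have "\<dots> \<le> t * (r * (\<Sum>j<n. spin (e j) * of_bool (A i j)))"
    using deg t ln_gt_zero[OF \<delta>]
    by (intro mult_left_mono) (simp_all add: r_def sum_distrib_left mult.assoc del: sum_mult_of_bool_eq)
  also have "\<dots> = 2 * x"
    by (simp add: x_def)
  finally have "1 - 2 * exp (- (K * ln \<delta>)) \<le> 1 - 2 * exp (- 2 * x)"
    by simp
  also have "\<dots> \<le> tanh x"
    by (rule tanh_ge_one_minus_two_exp)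
  finally show "1 - 2 * exp (- (K * ln \<delta>)) \<le> r * posterior_gap n (two_block p q) e A i"
    unfolding tanh_x .
  show "r * posterior_gap n (two_block p q) e A i \<le> 1"
    unfolding tanh_x using tanh_real_lt_1[of x] by simp
qed

lemma abs_sum_mult_diff_sum_le:
  fixes r z :: "nat \<Rightarrow> real"
  assumes r: "\<And>i. i < n \<Longrightarrow> \<bar>r i\<bar> \<le> 1" and z: "\<And>i. i < n \<Longrightarrow> 1 - \<eta> \<le> z i \<and> z i \<le> 1"
  shows "\<bar>(\<Sum>i<n. r i * z i) - (\<Sum>i<n. r i)\<bar> \<le> real n * \<eta>"
proof -
  have "\<bar>(\<Sum>i<n. r i * z i) - (\<Sum>i<n. r i)\<bar> = \<bar>\<Sum>i<n. r i * (1 - z i)\<bar>"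
    by (simp add: sum_subtractf algebra_simps)
  also have "\<dots> \<le> (\<Sum>i<n. \<bar>r i\<bar> * (1 - z i))"
    using z by (auto intro!: order_trans[OF sum_abs] sum_mono simp: abs_mult)
  also have "\<dots> \<le> (\<Sum>i<n::nat. \<eta>)"
  proof (rule sum_mono)
    fix i assume "i \<in> {..<n}"
    then have "\<bar>r i\<bar> \<le> 1" "1 - \<eta> \<le> z i" "z i \<le> 1"
      using r z by auto
    then show "\<bar>r i\<bar> * (1 - z i) \<le> \<eta>"
      using mult_left_le_one_le[of "1 - z i" "\<bar>r i\<bar>"] by simp
  qed
  finally show ?thesis
    by simp
qed

lemma score_margin_pos:
  fixes p q \<delta> \<sigma> K :: real
  assumes pq: "0 < q" "q \<le> p" "p < 1" and odds: "\<delta> * (q * (1 - p)) \<le> p * (1 - q)" and \<delta>: "1 < \<delta>"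
    and e: "\<forall>j<n. e j \<in> {1, 2}" and e_bal: "(\<Sum>j<n. spin (e j)) = 0"
    and c_bal: "(\<Sum>i<n. spin (c i)) = 0" and sym: "\<And>i j. A i j = A j i"
    and \<sigma>: "\<sigma> = 1 \<or> \<sigma> = -1" and K: "0 \<le> K" "4 * real n * exp (- (K * ln \<delta>)) < 1"
    and deg: "\<And>i. i < n \<Longrightarrow> K \<le> (\<Sum>j<n. \<sigma> * spin (c i) * spin (e j) * of_bool (A i j))"
    and assort: "\<And>j. j < n \<Longrightarrow> 1 \<le> (\<Sum>i<n. spin (c j) * spin (c i) * of_bool (A j i))"
    and j: "j < n"
  shows "0 < \<sigma> * spin (c j) * (est_score n (two_block p q) e A j 1 - est_score n (two_block p q) e A j 2)"
proof -
  define t where "t = logit p - logit q"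
  define L where "L = ln (1 - q) - ln (1 - p)"
  define \<eta> where "\<eta> = 2 * exp (- (K * ln \<delta>))"
  define z where "z i = \<sigma> * spin (c i) * posterior_gap n (two_block p q) e A i" for i
  define r where "r i = spin (c j) * spin (c i)" for i
  have t: "0 < t"
    using ln_le_logit_diff[OF pq _ odds] ln_gt_zero[OF \<delta>] \<delta> unfolding t_def by linarith
  have L: "0 \<le> L" "L \<le> t"
    using pq by (simp_all add: L_def t_def logit_def)
  have z: "1 - \<eta> \<le> z i \<and> z i \<le> 1" if "i < n" for i
    using posterior_margin_bounds[where c = c and i = i and A = A, OF pq odds \<delta> e e_bal \<sigma> K(1) deg[OF that]]
    by (simp add: z_def \<eta>_def)
  have "\<sigma> * spin (c j) * posterior_gap n (two_block p q) e A i = r i * z i" for i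
    by (simp add: r_def z_def mult_ac)
  then have eq: "\<sigma> * spin (c j) * (est_score n (two_block p q) e A j 1 - est_score n (two_block p q) e A j 2)
      = t * (\<Sum>i<n. (r i * of_bool (A j i)) * z i) - L * (\<Sum>i<n. r i * z i)"
    unfolding est_score_diff t_def[symmetric] L_def[symmetric]
    by (simp add: sum_distrib_left sum_subtractf sym[of j] algebra_simps del: sum_mult_of_bool_eq)
  have same_side: "1 - real n * \<eta> \<le> (\<Sum>i<n. (r i * of_bool (A j i)) * z i)"
    using abs_sum_mult_diff_sum_le[of n "\<lambda>i. r i * of_bool (A j i)" \<eta> z] z assort[OF j]
    by (simp add: r_def abs_mult del: sum_mult_of_bool_eq)
  have balance: "(\<Sum>i<n. r i * z i) \<le> real n * \<eta>"
    using abs_sum_mult_diff_sum_le[of n r \<eta> z] z c_bal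
    by (simp add: r_def abs_mult sum_distrib_left[symmetric])
  have "t * (1 - real n * \<eta>) - L * (real n * \<eta>)
      \<le> t * (\<Sum>i<n. (r i * of_bool (A j i)) * z i) - L * (\<Sum>i<n. r i * z i)"
    using mult_left_mono[OF same_side, of t] mult_left_mono[OF balance L(1)] t by linarith
  moreover have "L * (real n * \<eta>) \<le> t * (real n * \<eta>)" and "0 < t * (1 - 2 * (real n * \<eta>))"
    using L t K(2) by (simp_all add: mult_right_mono \<eta>_def)
  ultimately show ?thesis
    unfolding eq by (simp add: algebra_simps)
qed

lemma c_hat_eq_up_to_perm_on_good_event:
  fixes \<delta> m a b \<sigma> K :: real
  assumes \<delta>: "1 < \<delta>" and m: "0 < m" and ba: "b < a"
    and e: "\<forall>j<n. e j \<in> {1, 2}" and c: "\<forall>j<n. c j \<in> {1, 2}"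
    and e_bal: "(\<Sum>j<n. spin (e j)) = 0" and c_bal: "(\<Sum>i<n. spin (c i)) = 0"
    and sym: "\<And>i j. A i j = A j i"
    and \<sigma>: "\<sigma> = 1 \<or> \<sigma> = -1" and K: "0 \<le> K" "4 * real n * exp (- (K * ln \<delta>)) < 1"
    and deg: "\<And>i. i < n \<Longrightarrow> K \<le> (\<Sum>j<n. \<sigma> * spin (c i) * spin (e j) * of_bool (A i j))"
    and assort: "\<And>j. j < n \<Longrightarrow> 1 \<le> (\<Sum>i<n. spin (c j) * spin (c i) * of_bool (A j i))"
  shows "\<forall>(ah, bh) \<in> P_delta \<delta> m a b. eq_up_to_perm n (c_hat n m ah bh e A) c"
proof clarify
  fix ah bh assume "(ah, bh) \<in> P_delta \<delta> m a b"
  then have h: "0 < ah" "ah < m" "0 < bh" "bh < m" "\<delta> * bh \<le> ah"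
    using ba by (auto simp: P_delta_def le_divide_eq)
  have "bh < \<delta> * bh"
    using h(3) \<delta> by simp
  with h(5) have "bh < ah"
    by linarith
  define p where "p = edge_prob m ah"
  define q where "q = edge_prob m bh"
  have pq: "0 < q" "q \<le> p" "p < 1"
    using edge_prob_strict_bounds[of bh m] edge_prob_strict_bounds[of ah m] h \<open>bh < ah\<close>
      edge_prob_mono[OF m, of bh ah] by (simp_all add: p_def q_def)
  have odds: "\<delta> * (q * (1 - p)) \<le> p * (1 - q)"
    using edge_prob_odds_ratio_ge[OF m h(3) \<open>bh < ah\<close> h(2)] h \<delta> by (simp add: p_def q_def)
  have margin: "0 < \<sigma> * spin (c j) * (est_score n (two_block p q) e A j 1 - est_score n (two_block p q) e A j 2)"
    if "j < n" for j
    by (rule score_margin_pos[OF pq odds \<delta> e e_bal c_bal sym \<sigma> K deg assort that])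
  have c_hat: "c_hat n m ah bh e A j
      = (if est_score n (two_block p q) e A j 2 \<le> est_score n (two_block p q) e A j 1 then 1 else 2)" for j
    by (simp add: c_hat_def Pmat_eq_two_block p_def q_def)
  from \<sigma> show "eq_up_to_perm n (c_hat n m ah bh e A) c"
    using c margin by (fastforce simp: eq_up_to_perm_def c_hat spin_def zero_less_mult_iff)
qed

lemma sum_over_label_pairs:
  fixes g :: "nat \<Rightarrow> nat \<Rightarrow> real" and c e :: "nat \<Rightarrow> nat"
  assumes "\<forall>w<n. c w \<in> {1, 2} \<and> e w \<in> {1, 2}"
  shows "(\<Sum>w<n. g (c w) (e w))
       = (let N = (\<lambda>k l. real (card {w. w < n \<and> c w = k \<and> e w = l}))
          in N 1 1 * g 1 1 + N 1 2 * g 1 2 + N 2 1 * g 2 1 + N 2 2 * g 2 2)"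
  using assms
proof (induction n)
  case 0
  then show ?case by simp
next
  case (Suc n)
  have "{w. w < Suc n \<and> c w = k \<and> e w = l}
      = (if c n = k \<and> e n = l then insert n else id) {w. w < n \<and> c w = k \<and> e w = l}" for k l
    by (auto simp: less_Suc_eq)
  then have "real (card {w. w < Suc n \<and> c w = k \<and> e w = l})
      = real (card {w. w < n \<and> c w = k \<and> e w = l}) + of_bool (c n = k \<and> e n = l)" for k l
    by simp
  moreover have "c n \<in> {1, 2}" "e n \<in> {1, 2}"
    using Suc.prems by auto
  ultimately show ?case
    using Suc by (auto simp: Let_def algebra_simps)
qed

lemma label_pair_counts:
  assumes c: "balanced_labels n c" and e: "e \<in> E_gamma n \<gamma> c"
  shows "real (card {w. w < n \<and> c w = 1 \<and> e w = 1}) = \<gamma> * real (n div 2)"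
    and "real (card {w. w < n \<and> c w = 2 \<and> e w = 2}) = \<gamma> * real (n div 2)"
    and "real (card {w. w < n \<and> c w = 1 \<and> e w = 2}) = real (n div 2) - \<gamma> * real (n div 2)"
    and "real (card {w. w < n \<and> c w = 2 \<and> e w = 1}) = real (n div 2) - \<gamma> * real (n div 2)"
proof -
  have class_size: "card {w. w < n \<and> c w = k}
      = card {w. w < n \<and> c w = k \<and> e w = 1} + card {w. w < n \<and> c w = k \<and> e w = 2}" for k
  proof -
    have "card {w. w < n \<and> c w = k}
        = card ({w. w < n \<and> c w = k \<and> e w = 1} \<union> {w. w < n \<and> c w = k \<and> e w = 2})"
      using e by (intro arg_cong[where f = card]) (auto simp: E_gamma_def)
    also have "\<dots> = card {w. w < n \<and> c w = k \<and> e w = 1} + card {w. w < n \<and> c w = k \<and> e w = 2}"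
      by (rule card_Un_disjoint) auto
    finally show ?thesis .
  qed
  show "real (card {w. w < n \<and> c w = 1 \<and> e w = 1}) = \<gamma> * real (n div 2)"
    and "real (card {w. w < n \<and> c w = 2 \<and> e w = 2}) = \<gamma> * real (n div 2)"
    using e by (simp_all add: E_gamma_def)
  then show "real (card {w. w < n \<and> c w = 1 \<and> e w = 2}) = real (n div 2) - \<gamma> * real (n div 2)"
    and "real (card {w. w < n \<and> c w = 2 \<and> e w = 1}) = real (n div 2) - \<gamma> * real (n div 2)"
    using c class_size[of 1] class_size[of 2] by (simp_all add: balanced_labels_def)
qed

lemma labels_in_range:
  "balanced_labels n c \<Longrightarrow> e \<in> E_gamma n \<gamma> c \<Longrightarrow> \<forall>w<n. c w \<in> {1, 2} \<and> e w \<in> {1, 2}"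
  by (simp add: balanced_labels_def E_gamma_def)

lemma spin_sums_eq_zero:
  assumes c: "balanced_labels n c" and e: "e \<in> E_gamma n \<gamma> c"
  shows "(\<Sum>w<n. spin (c w)) = 0" and "(\<Sum>w<n. spin (e w)) = 0"
  using sum_over_label_pairs[OF labels_in_range[OF c e], unfolded Let_def label_pair_counts[OF c e],
      of "\<lambda>k l. spin k"]
    sum_over_label_pairs[OF labels_in_range[OF c e], unfolded Let_def label_pair_counts[OF c e],
      of "\<lambda>k l. spin l"]
  by (simp_all add: spin_def)

lemma two_block_row_sums:
  fixes p q :: real
  assumes c: "balanced_labels n c" and e: "e \<in> E_gamma n \<gamma> c" and v: "v < n"
  defines "m \<equiv> real (n div 2)" and "\<sigma> \<equiv> if 1 / 2 < \<gamma> then 1 else -1 :: real"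
  shows "(\<Sum>w<n. \<sigma> * spin (c v) * spin (e w) * two_block p q (c v) (c w)) = \<bar>2 * \<gamma> - 1\<bar> * (m * (p - q))"
    and "(\<Sum>w<n. spin (c v) * spin (c w) * two_block p q (c v) (c w)) = m * (p - q)"
    and "(\<Sum>w<n. two_block p q (c v) (c w)) = m * (p + q)"
proof -
  have k: "c v \<in> {1, 2}"
    using labels_in_range[OF c e] v by simp
  note sums = sum_over_label_pairs[OF labels_in_range[OF c e], unfolded Let_def label_pair_counts[OF c e],
      folded m_def]
  have "(\<Sum>w<n. spin (c v) * spin (e w) * two_block p q (c v) (c w)) = (2 * \<gamma> - 1) * m * (p - q)"
    using sums[of "\<lambda>k l. spin (c v) * spin l * two_block p q (c v) k"] k
    by (auto simp: spin_def two_block_def algebra_simps)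
  moreover have "(\<Sum>w<n. \<sigma> * spin (c v) * spin (e w) * two_block p q (c v) (c w))
      = \<sigma> * (\<Sum>w<n. spin (c v) * spin (e w) * two_block p q (c v) (c w))"
    by (simp add: sum_distrib_left mult.assoc)
  ultimately show "(\<Sum>w<n. \<sigma> * spin (c v) * spin (e w) * two_block p q (c v) (c w))
      = \<bar>2 * \<gamma> - 1\<bar> * (m * (p - q))"
    by (simp add: \<sigma>_def abs_if)
  show "(\<Sum>w<n. spin (c v) * spin (c w) * two_block p q (c v) (c w)) = m * (p - q)"
    using sums[of "\<lambda>k l. spin (c v) * spin k * two_block p q (c v) k"] k
    by (auto simp: spin_def two_block_def algebra_simps)
  show "(\<Sum>w<n. two_block p q (c v) (c w)) = m * (p + q)"
    using sums[of "\<lambda>k l. two_block p q (c v) k"] k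
    by (auto simp: two_block_def algebra_simps)
qed

lemma signal_fraction_bounds:
  fixes \<gamma> \<kappa> a g :: real
  assumes \<gamma>: "0 \<le> \<gamma>" "\<gamma> \<le> 1" and \<kappa>: "\<kappa> \<le> \<bar>2 * \<gamma> - 1\<bar> * 9 / 16"
    and a: "0 \<le> a" and g: "9 * a / 16 \<le> g"
  shows "\<kappa> \<le> 9 / 16" and "\<kappa> * a \<le> \<bar>2 * \<gamma> - 1\<bar> * g" and "\<kappa> * a \<le> g"
proof -
  show \<kappa>_le: "\<kappa> \<le> 9 / 16"
    using \<kappa> \<gamma> by (simp add: abs_if split: if_splits)
  have "\<kappa> * a \<le> \<bar>2 * \<gamma> - 1\<bar> * (9 * a / 16)"
    using \<kappa> a mult_right_mono[of \<kappa> "\<bar>2 * \<gamma> - 1\<bar> * 9 / 16" a] by simp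
  also have "\<dots> \<le> \<bar>2 * \<gamma> - 1\<bar> * g"
    using g by (intro mult_left_mono) auto
  finally show "\<kappa> * a \<le> \<bar>2 * \<gamma> - 1\<bar> * g" .
  have "\<kappa> * a \<le> 9 / 16 * a"
    using \<kappa>_le a by (intro mult_right_mono) auto
  with g show "\<kappa> * a \<le> g"
    by simp
qed

lemma sbm_recovery_prob_ge:
  fixes \<delta> \<gamma> \<kappa> a b :: real
  assumes \<delta>: "1 < \<delta>" and \<gamma>: "0 \<le> \<gamma>" "\<gamma> \<le> 1"
    and \<kappa>: "0 < \<kappa>" "\<kappa> \<le> \<bar>2 * \<gamma> - 1\<bar> * 9 / 16"
    and n: "2 \<le> n" and ab: "0 \<le> b" "4 * b \<le> a" "a \<le> real (n div 2)" "4 \<le> a"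
    and small: "4 * real n * exp (- (\<kappa> * a / 2 * ln \<delta>)) < 1"
    and c: "balanced_labels n c" and e: "e \<in> E_gamma n \<gamma> c"
  shows "1 - 2 * real n * exp (- (\<kappa>^2 * a / 64))
     \<le> sbm_prob n (Pmat (real (n div 2)) a b) c
          {A. \<forall>(ah, bh)\<in>P_delta \<delta> (real (n div 2)) a b.
                eq_up_to_perm n (c_hat n (real (n div 2)) ah bh e A) c}"
proof -
  define m where "m = real (n div 2)"
  define p where "p = edge_prob m a"
  define q where "q = edge_prob m b"
  define P where "P = two_block p q"
  \<comment> \<open>e agrees with c on most nodes if \<open>\<gamma> > 1/2\<close> and disagrees on most nodes otherwise\<close>
  define \<sigma> :: real where "\<sigma> = (if 1 / 2 < \<gamma> then 1 else -1)"
  define u_deg where "u_deg v w = \<sigma> * spin (c v) * spin (e w)" for v w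
  define u_com where "u_com v w = spin (c v) * spin (c w)" for v w
  have m: "0 < m"
    using n by (simp add: m_def)
  have gap: "9 * a / 16 \<le> m * (p - q)" "m * (p + q) \<le> 4 * a"
    using edge_prob_gap_bounds[OF m ab(1,2)] ab(3) by (simp_all add: m_def p_def q_def)
  have P: "0 \<le> P k l \<and> P k l \<le> 1" "P k l = P l k" for k l
    using edge_prob_bounds[OF m] ab by (auto simp: P_def two_block_def p_def q_def m_def)
  have c_lab: "\<forall>i<n. c i \<in> {1, 2}" and e_lab: "\<forall>i<n. e i \<in> {1, 2}"
    using labels_in_range[OF c e] by auto
  note sums = two_block_row_sums[OF c e, where p = p and q = q, folded m_def \<sigma>_def P_def]
  have mean_deg: "(\<Sum>w<n. u_deg v w * P (c v) (c w)) = \<bar>2 * \<gamma> - 1\<bar> * (m * (p - q))" if "v < n" for v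
    using sums(1)[OF that] by (simp add: u_deg_def)
  have mean_com: "(\<Sum>w<n. u_com v w * P (c v) (c w)) = m * (p - q)" if "v < n" for v
    using sums(2)[OF that] by (simp add: u_com_def)
  note \<kappa>_bounds = signal_fraction_bounds[OF \<gamma> \<kappa>(2) _ gap(1)]
  show ?thesis
    unfolding m_def[symmetric] Pmat_eq_two_block p_def[symmetric] q_def[symmetric] P_def[symmetric]
  proof (rule sbm_prob_ge_if_rows_above_half_mean[where u\<^sub>1 = u_deg and u\<^sub>2 = u_com])
    show "\<bar>u_deg v w\<bar> \<le> 1" "\<bar>u_com v w\<bar> \<le> 1" for v w
      by (simp_all add: u_deg_def u_com_def \<sigma>_def abs_mult)
    show "\<kappa> * a \<le> (\<Sum>w<n. u_deg v w * P (c v) (c w))" "\<kappa> * a \<le> (\<Sum>w<n. u_com v w * P (c v) (c w))"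
      if "v < n" for v
      using mean_deg[OF that] mean_com[OF that] \<kappa>_bounds ab by simp_all
    show "(\<Sum>w<n. P (c v) (c w)) \<le> 4 * a" if "v < n" for v
      using sums(3)[OF that] gap(2) by simp
  next
    fix x assume good: "x \<notin> row_below_half_mean n P c u_deg" "x \<notin> row_below_half_mean n P c u_com"
    have above: "(\<Sum>w<n. u v w * P (c v) (c w)) / 2 < (\<Sum>w<n. u v w * of_bool (sym_matrix x v w))"
      if "x \<notin> row_below_half_mean n P c u" "v < n" for u v
      using that unfolding row_below_half_mean_def mem_Collect_eq not_le[symmetric] by blast
    have \<sigma>: "\<sigma> = 1 \<or> \<sigma> = -1"
      by (simp add: \<sigma>_def)
    show "sym_matrix x \<in> {A. \<forall>(ah, bh)\<in>P_delta \<delta> m a b. eq_up_to_perm n (c_hat n m ah bh e A) c}"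
      unfolding mem_Collect_eq
    proof (rule c_hat_eq_up_to_perm_on_good_event[OF \<delta> m _ e_lab c_lab spin_sums_eq_zero(2,1)[OF c e]
          sym_matrix_commute \<sigma> _ small[folded mult.assoc]])
      show "b < a" "0 \<le> \<kappa> * a / 2"
        using ab \<kappa> by simp_all
      show "\<kappa> * a / 2 \<le> (\<Sum>j<n. \<sigma> * spin (c i) * spin (e j) * of_bool (sym_matrix x i j))" if "i < n" for i
        using above[OF good(1) that] mean_deg[OF that] \<kappa>_bounds(2) ab
        by (simp add: u_deg_def del: sum_mult_of_bool_eq)
      show "1 \<le> (\<Sum>i<n. spin (c j) * spin (c i) * of_bool (sym_matrix x j i))" if "j < n" for j
        using above[OF good(2) that] mean_com[OF that] gap(1) ab(4)
        by (simp add: u_com_def del: sum_mult_of_bool_eq)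
    qed
  qed (use P \<kappa> \<kappa>_bounds(1) ab in auto)
qed

section \<open>Consequences of the signal conditions\<close>

lemma weighted_gap_condition_imp:
  fixes a b g \<epsilon> :: real
  assumes g: "1 / 2 < g" "g < 1" and ab: "0 \<le> a" "0 \<le> b" and \<epsilon>: "0 < \<epsilon>" "\<epsilon> < 1"
    and H: "2 * (1 + \<epsilon>) * ((1 - g) * a + g * b) \<le> \<epsilon> * ((2 * g - 1) * \<bar>a - b\<bar>)"
  shows "4 * b \<le> a"
proof -
  have "2 * (1 + \<epsilon>) * (g * b) \<le> 2 * (1 + \<epsilon>) * ((1 - g) * a + g * b)"
    using g ab \<epsilon> by (intro mult_left_mono) auto
  with H have gb: "2 * (1 + \<epsilon>) * (g * b) \<le> \<epsilon> * ((2 * g - 1) * \<bar>a - b\<bar>)"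
    by linarith
  show ?thesis
  proof (cases "b < a")
    case True
    have "(2 * g - 1) * \<bar>a - b\<bar> \<le> g * a"
      using g ab True by (intro mult_mono) auto
    then have "\<epsilon> * ((2 * g - 1) * \<bar>a - b\<bar>) \<le> \<epsilon> * (g * a)"
      using \<epsilon> by (intro mult_left_mono) auto
    with gb have "g * (2 * (1 + \<epsilon>) * b) \<le> g * (\<epsilon> * a)"
      by (simp add: algebra_simps)
    then have "2 * (1 + \<epsilon>) * b \<le> \<epsilon> * a"
      using g by simp
    moreover have "0 \<le> (1 - \<epsilon>) * a"
      using \<epsilon> ab by simp
    ultimately have "0 \<le> (1 + \<epsilon>) * (a - 4 * b)"
      by (simp add: algebra_simps)
    then show ?thesis
      using \<epsilon> by (simp add: zero_le_mult_iff)
  next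
    case False
    then have "\<epsilon> * ((2 * g - 1) * \<bar>a - b\<bar>) \<le> \<epsilon> * ((2 * g - 1) * b)"
      using g \<epsilon> ab by (intro mult_left_mono) auto
    with gb have "(2 * g + \<epsilon>) * b \<le> 0"
      by (simp add: algebra_simps)
    with g \<epsilon> ab have "b = 0"
      by (simp add: mult_le_0_iff)
    with ab show ?thesis
      by simp
  qed
qed

lemma a_gamma_condition_imp:
  fixes a b \<gamma> \<epsilon> :: real
  assumes \<gamma>: "0 < \<gamma>" "\<gamma> < 1" "\<gamma> \<noteq> 1 / 2" and ab: "0 \<le> a" "0 \<le> b" and \<epsilon>: "0 < \<epsilon>" "\<epsilon> < 1"
    and H: "2 * (1 + \<epsilon>) * a_gamma \<gamma> a b \<le> \<epsilon> * \<bar>(1 - 2 * \<gamma>) * (a - b)\<bar>"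
  shows "4 * b \<le> a"
proof -
  define g where "g = max \<gamma> (1 - \<gamma>)"
  have "1 / 2 < g" "g < 1"
    using \<gamma> by (auto simp: g_def max_def)
  moreover have "a_gamma \<gamma> a b = (1 - g) * a + g * b"
    and "\<bar>(1 - 2 * \<gamma>) * (a - b)\<bar> = (2 * g - 1) * \<bar>a - b\<bar>"
    using \<gamma> by (auto simp: a_gamma_def g_def max_def abs_mult)
  ultimately show ?thesis
    using weighted_gap_condition_imp[OF _ _ ab \<epsilon>, of g] H by simp
qed

lemma signal_strength_consequences:
  fixes a b C \<kappa> \<delta> :: real
  assumes n: "3 \<le> n" and ab: "0 \<le> b" "4 * b \<le> a" and \<kappa>: "0 < \<kappa>" and \<delta>: "1 < \<delta>"
    and C: "8 \<le> C" "8 / (\<kappa> * ln \<delta>) \<le> C" and X: "C * ln (real n) \<le> (a - b)^2 / (a + b)"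
  shows "(a - b)^2 / (a + b) \<le> 2 * a" and "4 \<le> a" and "2 * ln (real n) \<le> \<kappa> * a / 2 * ln \<delta>"
proof -
  have "exp 1 \<le> real n"
    using exp_le n by linarith
  then have ln_n: "1 \<le> ln (real n)"
    using n by (simp add: ln_ge_iff)
  have "0 < C * ln (real n)"
    using C ln_n by simp
  with X ab have "0 < a" \<comment> \<open>for a = 0 also b = 0, and the quotient is 0 / 0 = 0\<close>
    by (cases "a = 0") auto
  have "(a - b)^2 \<le> (a + b) * (a + b)"
    using ab by (simp add: power2_eq_square algebra_simps)
  also have "\<dots> \<le> (a + b) * (2 * a)"
    using ab by (intro mult_left_mono) auto
  finally show X_le: "(a - b)^2 / (a + b) \<le> 2 * a"
    using \<open>0 < a\<close> ab by (simp add: divide_le_eq mult.commute)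
  with X have aC: "C * ln (real n) \<le> 2 * a"
    by linarith
  have "8 * 1 \<le> C * ln (real n)"
    using C ln_n by (intro mult_mono) auto
  with aC show "4 \<le> a"
    by simp
  have "8 / (\<kappa> * ln \<delta>) * ln (real n) \<le> 2 * a"
    using mult_right_mono[OF C(2), of "ln (real n)"] ln_n aC by simp
  then show "2 * ln (real n) \<le> \<kappa> * a / 2 * ln \<delta>"
    using \<kappa> \<delta> by (simp add: field_simps)
qed

lemma four_mul_exp_lt_one:
  assumes n: "4 < n" and y: "2 * ln (real n) \<le> y"
  shows "4 * real n * exp (- y) < 1"
proof -
  have "exp (- y) \<le> exp (- ln (real n ^ 2))"
    using y n by (simp add: ln_realpow)
  also have "\<dots> = 1 / real n ^ 2"
    using n by (simp add: exp_minus inverse_eq_divide)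
  finally have "4 * real n * exp (- y) \<le> 4 * real n * (1 / real n ^ 2)"
    by (rule mult_left_mono) simp
  also have "\<dots> < 1"
    using n by (simp add: power2_eq_square)
  finally show ?thesis .
qed

lemma exp_signal_bound_weaken:
  fixes a b \<kappa> :: real
  assumes "0 \<le> a" "(a - b)^2 / (a + b) \<le> 2 * a"
  shows "2 * real n * exp (- (\<kappa>^2 * a / 64))
       \<le> 3 * real n * exp (- ((\<kappa> / 2 / 4)^2 * (a - b)^2 / (4 * (a + b))))"
proof -
  have "(\<kappa> / 2 / 4)^2 * (a - b)^2 / (4 * (a + b)) = \<kappa>^2 / 256 * ((a - b)^2 / (a + b))"
    by (simp add: power2_eq_square)
  also have "\<dots> \<le> \<kappa>^2 / 256 * (2 * a)"
    using assms by (intro mult_left_mono) auto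
  also have "\<dots> \<le> \<kappa>^2 * a / 64"
    using assms by simp
  finally have "exp (- (\<kappa>^2 * a / 64)) \<le> exp (- ((\<kappa> / 2 / 4)^2 * (a - b)^2 / (4 * (a + b))))"
    by simp
  then show ?thesis
    by (intro mult_mono) auto
qed

lemma sbm_recovery_prob_ge_for_large_n:
  fixes \<delta> \<gamma> \<epsilon> \<kappa> C \<rho> a b :: real
  assumes \<delta>: "1 < \<delta>" and \<gamma>: "0 < \<gamma>" "\<gamma> < 1" "\<gamma> \<noteq> 1 / 2"
    and \<kappa>: "\<kappa> = \<bar>2 * \<gamma> - 1\<bar> * 9 / 16" and C: "C = max 8 (8 / (\<kappa> * ln \<delta>))" and \<rho>: "\<rho> = 1 - \<kappa> / 2"
    and \<epsilon>: "0 < \<epsilon>" "\<epsilon> < 1" and n: "5 \<le> n"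
    and ab: "0 \<le> a" "a \<le> real (n div 2)" "0 \<le> b"
    and X: "C * ln (real n) \<le> (a - b)^2 / (a + b)"
    and ag: "2 * (1 + \<epsilon>) * a_gamma \<gamma> a b \<le> \<epsilon> * \<bar>(1 - 2 * \<gamma>) * (a - b)\<bar>"
    and c: "balanced_labels n c" and e: "e \<in> E_gamma n \<gamma> c"
  shows "1 - (3 * real n * exp (- (((1 - \<rho>) / 4)^2 * (a - b)^2 / (4 * (a + b))))
            + real n * (real n + 2) *
              (exp (- (((1 - \<epsilon>) / 2)^2 * (2 * \<gamma> - 1)^2 * (a - b)^2 / (4 * (a + b))))
               + 2 * exp (- ((\<epsilon>^2 / 2) / (1 + \<epsilon> / 2) * a_gamma \<gamma> a b))))
     \<le> sbm_prob n (Pmat (real (n div 2)) a b) c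
          {A. \<forall>(ah, bh)\<in>P_delta \<delta> (real (n div 2)) a b.
                eq_up_to_perm n (c_hat n (real (n div 2)) ah bh e A) c}"
proof -
  have \<kappa>_pos: "0 < \<kappa>"
    using \<gamma> by (simp add: \<kappa>)
  have b4: "4 * b \<le> a"
    using a_gamma_condition_imp[OF \<gamma> ab(1,3) \<epsilon> ag] .
  have signal: "(a - b)^2 / (a + b) \<le> 2 * a" "4 \<le> a" "2 * ln (real n) \<le> \<kappa> * a / 2 * ln \<delta>"
    using signal_strength_consequences[OF _ ab(3) b4 \<kappa>_pos \<delta> _ _ X] n by (simp_all add: C)
  have "1 - 2 * real n * exp (- (\<kappa>^2 * a / 64))
     \<le> sbm_prob n (Pmat (real (n div 2)) a b) c
          {A. \<forall>(ah, bh)\<in>P_delta \<delta> (real (n div 2)) a b.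
                eq_up_to_perm n (c_hat n (real (n div 2)) ah bh e A) c}"
    using n \<gamma> \<kappa> \<kappa>_pos signal four_mul_exp_lt_one[OF _ signal(3)]
    by (intro sbm_recovery_prob_ge[OF \<delta> _ _ \<kappa>_pos _ _ ab(3) b4 ab(2) _ _ c e]) auto
  moreover have "2 * real n * exp (- (\<kappa>^2 * a / 64))
      \<le> 3 * real n * exp (- (((1 - \<rho>) / 4)^2 * (a - b)^2 / (4 * (a + b))))"
    using exp_signal_bound_weaken[OF ab(1) signal(1)] by (simp add: \<rho>)
  moreover have "0 \<le> real n * (real n + 2) *
              (exp (- (((1 - \<epsilon>) / 2)^2 * (2 * \<gamma> - 1)^2 * (a - b)^2 / (4 * (a + b))))
               + 2 * exp (- ((\<epsilon>^2 / 2) / (1 + \<epsilon> / 2) * a_gamma \<gamma> a b)))"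
    by (intro mult_nonneg_nonneg add_nonneg_nonneg) auto
  ultimately show ?thesis
    by linarith
qed

lemma eventually_sequentially_imp_ex_pos:
  "eventually P sequentially \<Longrightarrow> \<exists>N>0. \<forall>n\<ge>N. P n"
  unfolding eventually_sequentially by (metis Suc_leD zero_less_Suc)

theorem theorem3:
  fixes \<delta> \<gamma> :: real
  assumes "\<delta> > 1" and "0 < \<gamma>" and "\<gamma> < 1" and "\<gamma> \<noteq> 1/2"
  shows "\<exists>C>0. \<forall>(a::nat \<Rightarrow> real) (b::nat \<Rightarrow> real) (\<epsilon>::real).
     (0 < \<epsilon> \<and> \<epsilon> < 1 \<and>
      (\<forall>\<^sub>F n in sequentially. even n \<longrightarrow>
          0 \<le> a n \<and> a n \<le> real (n div 2) \<and> 0 \<le> b n \<and> b n \<le> real (n div 2) \<and>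
          (a n - b n)^2 / (a n + b n) \<ge> C * ln (real n) \<and>
          2 * (1 + \<epsilon>) * a_gamma \<gamma> (a n) (b n) \<le> \<epsilon> * \<bar>(1 - 2 * \<gamma>) * (a n - b n)\<bar>))
     \<longrightarrow> (\<exists>\<rho>. 0 < \<rho> \<and> \<rho> < 1 \<and> (\<exists>N>0. \<forall>n\<ge>N. even n \<longrightarrow>
          (\<forall>c. balanced_labels n c \<longrightarrow> (\<forall>e\<in>E_gamma n \<gamma> c.
             sbm_prob n (Pmat (real (n div 2)) (a n) (b n)) c
               {A. \<forall>(ah, bh)\<in>P_delta \<delta> (real (n div 2)) (a n) (b n).
                     eq_up_to_perm n (c_hat n (real (n div 2)) ah bh e A) c}
             \<ge> 1 - (3 * real n * exp (- (((1 - \<rho>) / 4)^2 * (a n - b n)^2 / (4 * (a n + b n))))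
                    + real n * (real n + 2) *
                      (exp (- (((1 - \<epsilon>) / 2)^2 * (2 * \<gamma> - 1)^2 * (a n - b n)^2 / (4 * (a n + b n))))
                       + 2 * exp (- ((\<epsilon>^2 / 2) / (1 + \<epsilon> / 2) * a_gamma \<gamma> (a n) (b n)))))))))"
proof -
  define \<kappa> where "\<kappa> = \<bar>2 * \<gamma> - 1\<bar> * 9 / 16"
  define C where "C = max 8 (8 / (\<kappa> * ln \<delta>))"
  have \<kappa>: "0 < \<kappa>" "\<kappa> < 2"
    using assms by (auto simp: \<kappa>_def abs_if)
  have "0 < C"
    by (simp add: C_def)
  show ?thesis
  proof (rule exI[of _ C], intro conjI allI impI \<open>0 < C\<close>, elim conjE, goal_cases)
    case (1 a b \<epsilon>)
    note hyp = 1
    show ?case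
    proof (intro exI[of _ "1 - \<kappa> / 2"] conjI eventually_sequentially_imp_ex_pos, goal_cases)
      case 1
      show ?case using \<kappa> by simp
    next
      case 2
      show ?case using \<kappa> by simp
    next
      case 3
      show ?case
        using eventually_conj[OF hyp(3) eventually_ge_at_top[of 5]]
        by (elim eventually_mono)
           (blast intro: sbm_recovery_prob_ge_for_large_n[OF assms \<kappa>_def C_def refl hyp(1,2)])
    qed
  qed
qed

end
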